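(* Let $X$ be a random vector in $\mathbb{R}^n$, let $T=g(X)$ for a deterministic function $g:\mathbb{R}^n\to\mathcal T$ (the task variable, discrete or continuous), let $f_{\boldsymbol\eta}:\mathbb{R}^n\to\mathbb{R}^m$ be a deterministic function with parameter $\boldsymbol\eta\in\mathbb{R}^d$, let $t>0$, let $Z_t\sim\mathcal N(\mathbf 0,t\mathbf I_m)$ be independent of $X$, and set $Y_t=f_{\boldsymbol\eta}(X)+Z_t$. Let $s_{Y_t}(\mathbf y)=\nabla_{\mathbf y}\log p_{Y_t,\boldsymbol\eta}(\mathbf y)$ be the marginal score of $Y_t$ and $s_{Y_t|T}(\mathbf y|\tau)=\nabla_{\mathbf y}\log p_{Y_t|T,\boldsymbol\eta}(\mathbf y|\tau)$ the conditional score of $Y_t$ given $T=\tau$. Under standard regularity conditions ($f_{\boldsymbol\eta}$ differentiable in $\boldsymbol\eta$, and exchange of differentiation in $\boldsymbol\eta$ with expectation/integration permitted), $$\nabla_{\boldsymbol\eta} I(T;Y_t)=\mathbb{E}_{X,Z_t}\!\left[Df_{\boldsymbol\eta}(X)^\top\big(s_{Y_t|T}(Y_t|T)-s_{Y_t}(Y_t)\big)\right],$$ where $Df_{\boldsymbol\eta}(\mathbf x)\in\mathbb{R}^{m\times d}$ is the Jacobian of $\boldsymbol\eta\mapsto f_{\boldsymbol\eta}(\mathbf x)$.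
   Context: $I(\cdot;\cdot)$ denotes mutual information. The expectation over $T$ is implicit since $T=g(X)$ is determined by $X$. The densities $p_{Y_t,\boldsymbol\eta}$ and $p_{Y_t|T,\boldsymbol\eta}$ depend on $\boldsymbol\eta$ through $f_{\boldsymbol\eta}$. *)

theory Defs
  imports "HOL-Analysis.Analysis" "HOL-Probability.Probability"
begin

definition gauss_vec_density :: "real \<Rightarrow> real^'m \<Rightarrow> real" where
  "gauss_vec_density t z =
     (2 * pi * t) powr (- real CARD('m) / 2) * exp (- (norm z)\<^sup>2 / (2 * t))"

definition gauss_vec :: "real \<Rightarrow> (real^'m) measure" where
  "gauss_vec t = density lborel (\<lambda>z. ennreal (gauss_vec_density t z))"

definition grad :: "('a::real_inner \<Rightarrow> real) \<Rightarrow> 'a \<Rightarrow> 'a" where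
  "grad h x = (SOME G. (h has_derivative (\<lambda>v. G \<bullet> v)) (at x))"

end

theory Submission
  imports Defs
begin

text \<open>The mutual information is the expectation of the log ratio
  \<open>L\<^sub>\<eta> = ln p\<^sub>\<eta>(Y\<^sub>\<eta> | T) - ln p\<^sub>\<eta>(Y\<^sub>\<eta>)\<close>, so its gradient is the expectation of
  \<open>\<nabla>\<^sub>\<eta> L\<^sub>\<eta>\<close>. Since \<open>Y\<^sub>\<eta> = f\<^sub>\<eta>(X) + Z\<close>, the chain rule splits each
  \<open>\<nabla>\<^sub>\<eta> ln p\<^sub>\<eta>(Y\<^sub>\<eta>)\<close> into the explicit parameter derivative \<open>(\<nabla>\<^sub>\<eta> ln p\<^sub>\<eta>)(Y)\<close> and
  the Jacobian term \<open>Df\<^sup>T s(Y)\<close>. The explicit parts are scores, which have mean zero: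
  the expectation of \<open>\<nabla>\<^sub>\<eta> ln p\<^sub>\<eta>\<close> under \<open>p\<^sub>\<eta>\<close> is \<open>\<integral> \<nabla>\<^sub>\<eta> p\<^sub>\<eta>\<close>, the derivative of the
  constant total mass \<open>1\<close>.\<close>

lemma gauss_vec_density_eq_prod_normal_density:
  assumes t: "t > 0"
  shows "gauss_vec_density t (z::real^'m) = (\<Prod>b\<in>Basis. normal_density 0 (sqrt t) (z \<bullet> b))"
proof -
  define c where "c = 1 / sqrt (2 * pi * t)"
  have p: "2 * pi * t > 0" using t by simp
  have "(\<Prod>b\<in>Basis. normal_density 0 (sqrt t) (z \<bullet> b))
      = (\<Prod>b\<in>(Basis::(real^'m) set). c * exp (- (z \<bullet> b)\<^sup>2 / (2 * t)))"
    using t by (simp add: normal_density_def c_def)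
  also have "\<dots> = c ^ CARD('m) * exp (\<Sum>b\<in>(Basis::(real^'m) set). - (z \<bullet> b)\<^sup>2 / (2 * t))"
    by (simp add: prod.distrib exp_sum)
  also have "(\<Sum>b\<in>(Basis::(real^'m) set). - (z \<bullet> b)\<^sup>2 / (2 * t)) = - (norm z)\<^sup>2 / (2 * t)"
    unfolding power2_norm_eq_inner
    by (subst euclidean_inner) (simp add: power2_eq_square sum_divide_distrib[symmetric] sum_negf)
  also have "c ^ CARD('m) = (2 * pi * t) powr (- real CARD('m) / 2)"
  proof -
    have c: "c = (2 * pi * t) powr (- (1/2))"
      using p unfolding c_def powr_minus by (simp add: powr_half_sqrt inverse_eq_divide)
    have nz: "2 * pi * t \<noteq> 0"
      using p by linarith
    show ?thesis
      unfolding c powr_power[OF nz] by simp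
  qed
  finally show ?thesis unfolding gauss_vec_density_def ..
qed

lemma prob_space_gauss_vec:
  assumes t: "t > 0"
  shows "prob_space (gauss_vec t :: (real^'m) measure)"
proof
  have "emeasure (gauss_vec t :: (real^'m) measure) (space (gauss_vec t)) =
     (\<integral>\<^sup>+z. (\<Prod>b\<in>(Basis::(real^'m) set). ennreal (normal_density 0 (sqrt t) (z \<bullet> b))) \<partial>lborel)"
    unfolding gauss_vec_def using t
    by (subst emeasure_density) (auto simp: gauss_vec_density_eq_prod_normal_density[OF t] prod_ennreal)
  also have "\<dots> = (\<Prod>b\<in>(Basis::(real^'m) set). (\<integral>\<^sup>+x. ennreal (normal_density 0 (sqrt t) x) \<partial>lborel))"
    by (rule nn_integral_lborel_prod) auto
  also have "(\<integral>\<^sup>+x. ennreal (normal_density 0 (sqrt t) x) \<partial>lborel) = 1"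
    using t by (subst nn_integral_eq_integral) auto
  finally show "emeasure (gauss_vec t :: (real^'m) measure) (space (gauss_vec t)) = 1"
    by simp
qed

lemma has_derivative_grad:
  fixes h :: "'a::euclidean_space \<Rightarrow> real"
  assumes "h differentiable (at x)"
  shows "(h has_derivative (\<lambda>v. grad h x \<bullet> v)) (at x)"
proof -
  obtain D where D: "(h has_derivative D) (at x)"
    using assms unfolding differentiable_def by blast
  have "D = (\<lambda>v. adjoint D 1 \<bullet> v)"
    using adjoint_works[OF has_derivative_linear[OF D], of _ 1] by (simp add: fun_eq_iff inner_commute)
  then have "\<exists>G. (h has_derivative (\<lambda>v. G \<bullet> v)) (at x)"
    using D by metis
  then show ?thesis
    unfolding grad_def by (rule someI_ex)
qed

lemma has_derivative_eq_grad:
  fixes h :: "'a::euclidean_space \<Rightarrow> real"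
  assumes "(h has_derivative D) (at x)"
  shows "D = (\<lambda>v. grad h x \<bullet> v)"
  using assms has_derivative_unique has_derivative_grad differentiable_def by blast

lemma grad_eqI:
  fixes h :: "'a::euclidean_space \<Rightarrow> real"
  assumes "(h has_derivative (\<lambda>v. G \<bullet> v)) (at x)"
  shows "grad h x = G"
  using has_derivative_eq_grad[OF assms] by (auto intro: euclidean_eqI simp: fun_eq_iff)

lemma grad_const: "grad (\<lambda>x::'a::euclidean_space. c) x = 0"
  by (rule grad_eqI) simp

lemma differentiable_ln:
  fixes h :: "'a::euclidean_space \<Rightarrow> real"
  assumes "h differentiable (at x)" "0 < h x"
  shows "(\<lambda>y. ln (h y)) differentiable (at x)"
  using DERIV_compose_FDERIV[OF DERIV_ln[OF assms(2)] has_derivative_grad[OF assms(1)]]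
  unfolding differentiable_def by blast

lemma grad_ln:
  fixes h :: "'a::euclidean_space \<Rightarrow> real"
  assumes "h differentiable (at x)" "0 < h x"
  shows "grad (\<lambda>y. ln (h y)) x = (1 / h x) *\<^sub>R grad h x"
proof (rule grad_eqI)
  show "((\<lambda>y. ln (h y)) has_derivative (\<lambda>v. ((1 / h x) *\<^sub>R grad h x) \<bullet> v)) (at x)"
    using DERIV_compose_FDERIV[OF DERIV_ln[OF assms(2)] has_derivative_grad[OF assms(1)]]
    by (simp add: divide_inverse mult.commute)
qed

lemma differentiable_at_Pair_left:
  fixes F :: "'a::real_normed_vector \<times> 'b::real_normed_vector \<Rightarrow> 'c::real_normed_vector"
  assumes "F differentiable (at (x0, y0))"
  shows "(\<lambda>x. F (x, y0)) differentiable (at x0)"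
proof -
  have "(\<lambda>x. (x, y0)) differentiable (at x0)"
    by (intro differentiable_Pair differentiable_ident differentiable_const)
  then show ?thesis
    using differentiable_chain_at[of "\<lambda>x. (x, y0)" x0 F] assms by (simp add: comp_def)
qed

lemma has_derivative_comp_Pair_grad:
  fixes F :: "'a::euclidean_space \<times> 'b::euclidean_space \<Rightarrow> real"
  assumes F: "F differentiable (at (x0, u x0))" and u: "(u has_derivative U) (at x0)"
  shows "((\<lambda>x. F (x, u x)) has_derivative
           (\<lambda>h. grad (\<lambda>x. F (x, u x0)) x0 \<bullet> h + grad (\<lambda>y. F (x0, y)) (u x0) \<bullet> U h)) (at x0)"
proof -
  obtain D where D: "(F has_derivative D) (at (x0, u x0))"
    using F unfolding differentiable_def by blast
  have total: "((\<lambda>x. F (x, u x)) has_derivative (\<lambda>h. D (h, U h))) (at x0)"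
    using has_derivative_compose[OF has_derivative_Pair[OF has_derivative_ident u] D] by simp
  have "((\<lambda>x. F (x, u x0)) has_derivative (\<lambda>h. D (h, 0))) (at x0)"
    using has_derivative_compose[OF has_derivative_Pair[OF has_derivative_ident has_derivative_const] D]
    by simp
  then have partial1: "D (h, 0) = grad (\<lambda>x. F (x, u x0)) x0 \<bullet> h" for h
    by (auto dest: has_derivative_eq_grad simp: fun_eq_iff)
  have "((\<lambda>y. F (x0, y)) has_derivative (\<lambda>k. D (0, k))) (at (u x0))"
    using has_derivative_compose[OF has_derivative_Pair[OF has_derivative_const has_derivative_ident] D]
    by simp
  then have partial2: "D (0, k) = grad (\<lambda>y. F (x0, y)) (u x0) \<bullet> k" for k
    by (auto dest: has_derivative_eq_grad simp: fun_eq_iff)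
  have "D (h, U h) = D (h, 0) + D (0, U h)" for h
    using linear_add[OF has_derivative_linear[OF D], of "(h, 0)" "(0, U h)"] by simp
  then show ?thesis
    using total by (simp add: partial1 partial2)
qed

lemma has_derivative_ln_along:
  fixes p :: "real^'d \<Rightarrow> real^'m \<Rightarrow> real" and u :: "real^'d \<Rightarrow> real^'m"
  assumes p: "(\<lambda>q. p (fst q) (snd q)) differentiable (at (\<eta>0, u \<eta>0))" "0 < p \<eta>0 (u \<eta>0)"
    and u: "(u has_derivative (\<lambda>h. J *v h)) (at \<eta>0)"
  shows "((\<lambda>\<eta>. ln (p \<eta> (u \<eta>))) has_derivative
           (\<lambda>h. (grad (\<lambda>\<eta>. ln (p \<eta> (u \<eta>0))) \<eta>0 + transpose J *v grad (\<lambda>y. ln (p \<eta>0 y)) (u \<eta>0)) \<bullet> h))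
         (at \<eta>0)"
proof -
  have "(\<lambda>q. ln (p (fst q) (snd q))) differentiable (at (\<eta>0, u \<eta>0))"
    using differentiable_ln[OF p(1)] p(2) by simp
  from has_derivative_comp_Pair_grad[OF this u] show ?thesis
    by (simp add: inner_add_left dot_lmul_matrix)
qed

lemma grad_ln_ratio_along:
  fixes p q :: "real^'d \<Rightarrow> real^'m \<Rightarrow> real" and u :: "real^'d \<Rightarrow> real^'m"
  assumes p: "(\<lambda>r. p (fst r) (snd r)) differentiable (at (\<eta>0, u \<eta>0))" "0 < p \<eta>0 (u \<eta>0)"
    and q: "(\<lambda>r. q (fst r) (snd r)) differentiable (at (\<eta>0, u \<eta>0))" "0 < q \<eta>0 (u \<eta>0)"
    and u: "(u has_derivative (\<lambda>h. J *v h)) (at \<eta>0)"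
  shows "grad (\<lambda>\<eta>. ln (q \<eta> (u \<eta>)) - ln (p \<eta> (u \<eta>))) \<eta>0
       = transpose J *v (grad (\<lambda>y. ln (q \<eta>0 y)) (u \<eta>0) - grad (\<lambda>y. ln (p \<eta>0 y)) (u \<eta>0))
         + grad (\<lambda>\<eta>. ln (q \<eta> (u \<eta>0))) \<eta>0 - grad (\<lambda>\<eta>. ln (p \<eta> (u \<eta>0))) \<eta>0"
  using has_derivative_diff[OF has_derivative_ln_along[OF q u] has_derivative_ln_along[OF p u]]
  by (intro grad_eqI) (simp add: inner_diff_left matrix_vector_mult_diff_distrib algebra_simps)

lemma difference_quotient_tendsto_inner:
  fixes \<phi> :: "'a::real_inner \<Rightarrow> real"
  assumes "(\<phi> has_derivative (\<lambda>v. G \<bullet> v)) (at x)"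
  shows "(\<lambda>k. (\<phi> (x + inverse (real (Suc k)) *\<^sub>R b) - \<phi> x) * real (Suc k)) \<longlonglongrightarrow> G \<bullet> b"
proof -
  have "((\<lambda>s::real. x + s *\<^sub>R b) has_derivative (\<lambda>s. s *\<^sub>R b)) (at 0)"
    by (auto intro!: derivative_eq_intros)
  moreover have "(\<phi> has_derivative (\<lambda>v. G \<bullet> v)) (at (x + 0 *\<^sub>R b))"
    using assms by simp
  ultimately have "((\<lambda>s::real. \<phi> (x + s *\<^sub>R b)) has_derivative (\<lambda>s. G \<bullet> (s *\<^sub>R b))) (at 0)"
    by (rule has_derivative_compose)
  then have "((\<lambda>s::real. \<phi> (x + s *\<^sub>R b)) has_field_derivative (G \<bullet> b)) (at 0)"
    by (rule has_derivative_imp_has_field_derivative) simp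
  then have "((\<lambda>s. (\<phi> (x + s *\<^sub>R b) - \<phi> (x + 0 *\<^sub>R b)) / (s - 0)) \<longlongrightarrow> G \<bullet> b) (at 0)"
    unfolding has_field_derivative_iff .
  moreover have "filterlim (\<lambda>k. inverse (real (Suc k))) (at (0::real)) sequentially"
    unfolding filterlim_at using LIMSEQ_inverse_real_of_nat by auto
  ultimately show ?thesis
    using filterlim_compose by (fastforce simp: divide_inverse)
qed

lemma borel_measurable_grad:
  fixes F :: "'a::euclidean_space \<Rightarrow> 'b \<Rightarrow> real"
  assumes meas: "\<And>\<eta>. F \<eta> \<in> borel_measurable N"
    and diff: "\<And>x. x \<in> space N \<Longrightarrow> (\<lambda>\<eta>. F \<eta> x) differentiable (at \<eta>0)"
  shows "(\<lambda>x. grad (\<lambda>\<eta>. F \<eta> x) \<eta>0) \<in> borel_measurable N"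
proof (rule borel_measurable_LIMSEQ_metric)
  fix k :: nat
  show "(\<lambda>x. \<Sum>b\<in>Basis. ((F (\<eta>0 + inverse (real (Suc k)) *\<^sub>R b) x - F \<eta>0 x) * real (Suc k)) *\<^sub>R b)
      \<in> borel_measurable N"
    using meas by measurable
next
  fix x assume "x \<in> space N"
  then have "(\<lambda>k. \<Sum>b\<in>Basis. ((F (\<eta>0 + inverse (real (Suc k)) *\<^sub>R b) x - F \<eta>0 x) * real (Suc k)) *\<^sub>R b)
      \<longlonglongrightarrow> (\<Sum>b\<in>Basis. (grad (\<lambda>\<eta>. F \<eta> x) \<eta>0 \<bullet> b) *\<^sub>R b)"
    by (intro tendsto_sum tendsto_scaleR tendsto_const difference_quotient_tendsto_inner
        has_derivative_grad diff)
  then show "(\<lambda>k. \<Sum>b\<in>Basis. ((F (\<eta>0 + inverse (real (Suc k)) *\<^sub>R b) x - F \<eta>0 x) * real (Suc k)) *\<^sub>R b)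
      \<longlonglongrightarrow> grad (\<lambda>\<eta>. F \<eta> x) \<eta>0"
    by (simp add: euclidean_representation)
qed

lemma distributedI_cong_sets:
  assumes "sets N' = sets N" "X \<in> M \<rightarrow>\<^sub>M N'" "f \<in> borel_measurable N'"
    and "distr M N' X = density N f"
  shows "distributed M N X f"
proof -
  have "distr M N X = distr M N' X"
    using assms(1) by (intro distr_cong) simp_all
  then show ?thesis
    using assms unfolding distributed_def measurable_cong_sets[OF refl assms(1)]
      measurable_cong_sets[OF assms(1) refl] by simp
qed

lemma (in prob_space) mutual_information_cong_sets:
  assumes "sets S = sets S'" "sets T = sets T'"
  shows "mutual_information b S T X Y = mutual_information b S' T' X Y"
proof -
  have "distr M S X = distr M S' X" "distr M T Y = distr M T' Y"
    "distr M (S \<Otimes>\<^sub>M T) (\<lambda>\<omega>. (X \<omega>, Y \<omega>)) = distr M (S' \<Otimes>\<^sub>M T') (\<lambda>\<omega>. (X \<omega>, Y \<omega>))"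
    by (intro distr_cong sets_pair_measure_cong refl assms)+
  then show ?thesis
    unfolding mutual_information_def by simp
qed

lemma (in information_space) mutual_information_eq_integral_log_ratio:
  fixes Pxy :: "'b \<times> 'c \<Rightarrow> real" and Px :: "'b \<Rightarrow> real" and Py :: "'c \<Rightarrow> real"
  assumes "sigma_finite_measure S" "sigma_finite_measure T"
    and Px: "distributed M S X Px" "\<And>x. x \<in> space S \<Longrightarrow> 0 \<le> Px x"
    and Py: "distributed M T Y Py" "\<And>y. y \<in> space T \<Longrightarrow> 0 \<le> Py y"
    and Pxy: "distributed M (S \<Otimes>\<^sub>M T) (\<lambda>\<omega>. (X \<omega>, Y \<omega>)) Pxy"
      "\<And>x y. x \<in> space S \<Longrightarrow> y \<in> space T \<Longrightarrow> 0 \<le> Pxy (x, y)"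
  shows "mutual_information b S T X Y = (\<integral>\<omega>. log b (Pxy (X \<omega>, Y \<omega>) / (Px (X \<omega>) * Py (Y \<omega>))) \<partial>M)"
proof -
  have [measurable]: "Px \<in> borel_measurable S" "Py \<in> borel_measurable T"
    "Pxy \<in> borel_measurable (S \<Otimes>\<^sub>M T)"
    using Px Py Pxy by (auto intro: distributed_real_measurable simp: space_pair_measure)
  have "mutual_information b S T X Y
      = (\<integral>q. Pxy q * log b (Pxy q / (Px (fst q) * Py (snd q))) \<partial>(S \<Otimes>\<^sub>M T))"
    by (rule mutual_information_distr) fact+
  also have "\<dots> = (\<integral>\<omega>. log b (Pxy (X \<omega>, Y \<omega>) / (Px (X \<omega>) * Py (Y \<omega>))) \<partial>M)"
    using Pxy by (subst distributed_integral) (auto simp: space_pair_measure)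
  finally show ?thesis .
qed

lemma (in prob_space) mutual_information_eq_integral_ln_conditional_density:
  fixes py :: "'c \<Rightarrow> real" and pyx :: "'b \<Rightarrow> 'c \<Rightarrow> real"
  assumes N: "sigma_finite_measure N" and T: "T \<in> M \<rightarrow>\<^sub>M S"
    and Py: "distributed M N Y (\<lambda>y. ennreal (py y))" "\<And>y. 0 < py y"
    and Pyx: "distributed M (distr M S T \<Otimes>\<^sub>M N) (\<lambda>\<omega>. (T \<omega>, Y \<omega>))
      (\<lambda>q. ennreal (pyx (fst q) (snd q)))" "\<And>\<tau> y. 0 < pyx \<tau> y"
  shows "mutual_information (exp 1) S N T Y = (\<integral>\<omega>. ln (pyx (T \<omega>) (Y \<omega>)) - ln (py (Y \<omega>)) \<partial>M)"
proof -
  interpret information_space M "exp 1"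
    by standard simp
  have Pt: "distributed M (distr M S T) T (\<lambda>_. ennreal 1)"
    using T by (intro distributedI_cong_sets) (simp_all add: density_1)
  have "sigma_finite_measure (distr M S T)"
    using T by (intro prob_space_imp_sigma_finite prob_space_distr)
  note log_ratio = mutual_information_eq_integral_log_ratio[OF this N Pt _ Py(1) _ Pyx(1)]
  have "mutual_information (exp 1) S N T Y = mutual_information (exp 1) (distr M S T) N T Y"
    by (rule mutual_information_cong_sets) simp_all
  also have "\<dots> = (\<integral>\<omega>. ln (pyx (T \<omega>) (Y \<omega>)) - ln (py (Y \<omega>)) \<partial>M)"
    using log_ratio Py(2) Pyx(2) by (simp add: less_imp_le less_imp_neq[THEN not_sym] log_def ln_div)
  finally show ?thesis .
qed

lemma integral_score_eq_integral_grad_density: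
  fixes p :: "'e::euclidean_space \<Rightarrow> 'b \<Rightarrow> real"
  assumes X: "distributed M N X (\<lambda>x. ennreal (p \<eta>0 x))"
    and p_meas: "\<And>\<eta>. p \<eta> \<in> borel_measurable N"
    and p_pos: "\<And>x. 0 < p \<eta>0 x"
    and p_diff: "\<And>x. (\<lambda>\<eta>. p \<eta> x) differentiable (at \<eta>0)"
    and score_int: "integrable M (\<lambda>\<omega>. grad (\<lambda>\<eta>. ln (p \<eta> (X \<omega>))) \<eta>0)"
  shows "integrable N (\<lambda>x. grad (\<lambda>\<eta>. p \<eta> x) \<eta>0)"
    and "(\<integral>\<omega>. grad (\<lambda>\<eta>. ln (p \<eta> (X \<omega>))) \<eta>0 \<partial>M) = (\<integral>x. grad (\<lambda>\<eta>. p \<eta> x) \<eta>0 \<partial>N)"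
proof -
  define K where "K x = grad (\<lambda>\<eta>. p \<eta> x) \<eta>0" for x
  define H where "H x = (1 / p \<eta>0 x) *\<^sub>R K x" for x
  have score: "grad (\<lambda>\<eta>. ln (p \<eta> x)) \<eta>0 = H x" for x
    unfolding H_def K_def using p_diff p_pos by (rule grad_ln)
  have pH: "p \<eta>0 x *\<^sub>R H x = K x" for x
    unfolding H_def using p_pos[of x] by simp
  have K_meas: "K \<in> borel_measurable N"
    unfolding K_def[abs_def] using p_meas p_diff by (rule borel_measurable_grad)
  have [measurable]: "X \<in> M \<rightarrow>\<^sub>M N" "p \<eta>0 \<in> borel_measurable N" "H \<in> borel_measurable N"
    unfolding H_def[abs_def] using distributed_measurable[OF X] p_meas K_meas by measurable
  have dens: "distr M N X = density N (\<lambda>x. ennreal (p \<eta>0 x))"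
    using X by (rule distributed_distr_eq_density)
  have nonneg: "AE x in N. 0 \<le> p \<eta>0 x"
    using p_pos by (simp add: less_imp_le)
  have "integrable (distr M N X) H"
    using score_int by (simp add: score integrable_distr_eq)
  then show "integrable N (\<lambda>x. grad (\<lambda>\<eta>. p \<eta> x) \<eta>0)"
    unfolding dens using nonneg by (simp add: integrable_density pH K_def[symmetric])
  have "(\<integral>\<omega>. grad (\<lambda>\<eta>. ln (p \<eta> (X \<omega>))) \<eta>0 \<partial>M) = (\<integral>x. H x \<partial>distr M N X)"
    by (simp add: score integral_distr)
  also have "\<dots> = (\<integral>x. K x \<partial>N)"
    unfolding dens using nonneg by (simp add: integral_density pH)
  finally show "(\<integral>\<omega>. grad (\<lambda>\<eta>. ln (p \<eta> (X \<omega>))) \<eta>0 \<partial>M) = (\<integral>x. grad (\<lambda>\<eta>. p \<eta> x) \<eta>0 \<partial>N)"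
    unfolding K_def .
qed

lemma integral_grad_density_eq_0:
  fixes p :: "'e::euclidean_space \<Rightarrow> 'b \<Rightarrow> real"
  assumes total: "\<And>\<eta>. (\<integral>x. p \<eta> x \<partial>N) = 1"
    and exch: "((\<lambda>\<eta>. \<integral>x. p \<eta> x \<partial>N) has_derivative
                 (\<lambda>h. (\<integral>x. grad (\<lambda>\<eta>. p \<eta> x) \<eta>0 \<partial>N) \<bullet> h)) (at \<eta>0)"
  shows "(\<integral>x. grad (\<lambda>\<eta>. p \<eta> x) \<eta>0 \<partial>N) = 0"
proof -
  have "(\<integral>x. grad (\<lambda>\<eta>. p \<eta> x) \<eta>0 \<partial>N) = grad (\<lambda>\<eta>. \<integral>x. p \<eta> x \<partial>N) \<eta>0"
    using exch by (rule grad_eqI[symmetric])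
  also have "\<dots> = 0"
    by (simp add: total grad_const)
  finally show ?thesis .
qed

lemma (in prob_space) integral_score_eq_0:
  fixes p :: "'e::euclidean_space \<Rightarrow> 'b \<Rightarrow> real"
  assumes X: "\<And>\<eta>. distributed M N (X \<eta>) (\<lambda>x. ennreal (p \<eta> x))"
    and p_pos: "\<And>\<eta> x. 0 < p \<eta> x"
    and p_diff: "\<And>x. (\<lambda>\<eta>. p \<eta> x) differentiable (at \<eta>0)"
    and score_int: "integrable M (\<lambda>\<omega>. grad (\<lambda>\<eta>. ln (p \<eta> (X \<eta>0 \<omega>))) \<eta>0)"
    and exch: "((\<lambda>\<eta>. \<integral>x. p \<eta> x \<partial>N) has_derivative
      (\<lambda>h. (\<integral>x. grad (\<lambda>\<eta>. p \<eta> x) \<eta>0 \<partial>N) \<bullet> h)) (at \<eta>0)"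
  shows "(\<integral>\<omega>. grad (\<lambda>\<eta>. ln (p \<eta> (X \<eta>0 \<omega>))) \<eta>0 \<partial>M) = 0"
proof -
  have p_meas: "p \<eta> \<in> borel_measurable N" for \<eta>
    using X by (rule distributed_real_measurable[OF less_imp_le[OF p_pos]])
  have "(\<integral>x. p \<eta> x \<partial>N) = 1" for \<eta>
    using distributed_integral[OF X, of "\<lambda>_. 1"] p_pos by (simp add: less_imp_le prob_space)
  from integral_grad_density_eq_0[OF this exch]
  show ?thesis
    using integral_score_eq_integral_grad_density(2)[OF X p_meas p_pos p_diff score_int] by simp
qed

lemma (in prob_space) integral_conditional_score_eq_0:
  fixes p :: "'e::euclidean_space \<Rightarrow> 'c \<Rightarrow> 'b \<Rightarrow> real"
  assumes "sigma_finite_measure \<nu>" "sigma_finite_measure N"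
    and TY: "\<And>\<eta>. distributed M (\<nu> \<Otimes>\<^sub>M N) (\<lambda>\<omega>. (T \<omega>, Y \<eta> \<omega>))
      (\<lambda>q. ennreal (p \<eta> (fst q) (snd q)))"
    and p_pos: "\<And>\<eta> \<tau> y. 0 < p \<eta> \<tau> y"
    and p_diff: "\<And>\<tau> y. (\<lambda>\<eta>. p \<eta> \<tau> y) differentiable (at \<eta>0)"
    and score_int: "integrable M (\<lambda>\<omega>. grad (\<lambda>\<eta>. ln (p \<eta> (T \<omega>) (Y \<eta>0 \<omega>))) \<eta>0)"
    and total: "\<And>\<eta> \<tau>. \<tau> \<in> space \<nu> \<Longrightarrow> (\<integral>y. p \<eta> \<tau> y \<partial>N) = 1"
    and exch: "\<And>\<tau>. \<tau> \<in> space \<nu> \<Longrightarrow>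
      ((\<lambda>\<eta>. \<integral>y. p \<eta> \<tau> y \<partial>N) has_derivative (\<lambda>h. (\<integral>y. grad (\<lambda>\<eta>. p \<eta> \<tau> y) \<eta>0 \<partial>N) \<bullet> h)) (at \<eta>0)"
  shows "(\<integral>\<omega>. grad (\<lambda>\<eta>. ln (p \<eta> (T \<omega>) (Y \<eta>0 \<omega>))) \<eta>0 \<partial>M) = 0"
proof -
  interpret pair_sigma_finite \<nu> N
    using assms(1,2) by (simp add: pair_sigma_finite_def)
  have p_meas: "(\<lambda>q. p \<eta> (fst q) (snd q)) \<in> borel_measurable (\<nu> \<Otimes>\<^sub>M N)" for \<eta>
    using TY by (rule distributed_real_measurable[OF less_imp_le[OF p_pos]])
  have "\<And>q. 0 < p \<eta>0 (fst q) (snd q)" "\<And>q. (\<lambda>\<eta>. p \<eta> (fst q) (snd q)) differentiable (at \<eta>0)"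
    "integrable M (\<lambda>\<omega>. grad (\<lambda>\<eta>. ln (p \<eta> (fst (T \<omega>, Y \<eta>0 \<omega>)) (snd (T \<omega>, Y \<eta>0 \<omega>)))) \<eta>0)"
    using p_pos p_diff score_int by simp_all
  note score = integral_score_eq_integral_grad_density[where p = "\<lambda>\<eta> q. p \<eta> (fst q) (snd q)",
      OF TY p_meas this]
  have "(\<integral>\<omega>. grad (\<lambda>\<eta>. ln (p \<eta> (T \<omega>) (Y \<eta>0 \<omega>))) \<eta>0 \<partial>M)
      = (\<integral>q. grad (\<lambda>\<eta>. p \<eta> (fst q) (snd q)) \<eta>0 \<partial>(\<nu> \<Otimes>\<^sub>M N))"
    using score(2) by (simp only: fst_conv snd_conv)
  also have "\<dots> = (\<integral>\<tau>. (\<integral>y. grad (\<lambda>\<eta>. p \<eta> \<tau> y) \<eta>0 \<partial>N) \<partial>\<nu>)"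
    using integral_fst'[OF score(1)] unfolding fst_conv snd_conv by (rule sym)
  also have "\<dots> = (\<integral>\<tau>. 0 \<partial>\<nu>)"
    by (intro Bochner_Integration.integral_cong refl integral_grad_density_eq_0 total exch)
  finally show ?thesis
    by simp
qed

theorem proposition3:
  fixes \<mu> :: "(real^'n) measure"
    and S :: "'c measure"
    and g :: "real^'n \<Rightarrow> 'c"
    and f :: "real^'d \<Rightarrow> real^'n \<Rightarrow> real^'m"
    and Jf :: "real^'n \<Rightarrow> real^'d^'m"
    and t :: real
    and \<eta>0 :: "real^'d"
    and pY :: "real^'d \<Rightarrow> real^'m \<Rightarrow> real"
    and pYT :: "real^'d \<Rightarrow> 'c \<Rightarrow> real^'m \<Rightarrow> real"
  defines "M \<equiv> \<mu> \<Otimes>\<^sub>M gauss_vec t"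
    and "T \<equiv> (\<lambda>\<omega>::(real^'n) \<times> (real^'m). g (fst \<omega>))"
    and "Y \<equiv> (\<lambda>\<eta> (\<omega>::(real^'n) \<times> (real^'m)). f \<eta> (fst \<omega>) + snd \<omega>)"
    and "\<nu> \<equiv> distr (\<mu> \<Otimes>\<^sub>M gauss_vec t) S (\<lambda>\<omega>::(real^'n) \<times> (real^'m). g (fst \<omega>))"
    and "L \<equiv> (\<lambda>\<eta> (\<omega>::(real^'n) \<times> (real^'m)).
            ln (pYT \<eta> (g (fst \<omega>)) (f \<eta> (fst \<omega>) + snd \<omega>))
          - ln (pY \<eta> (f \<eta> (fst \<omega>) + snd \<omega>)))"
    and "sY \<equiv> (\<lambda>y. grad (\<lambda>y'. ln (pY \<eta>0 y')) y)"
    and "sYT \<equiv> (\<lambda>\<tau> y. grad (\<lambda>y'. ln (pYT \<eta>0 \<tau> y')) y)"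
  assumes prob_X: "prob_space \<mu>"
    and sets_X: "sets \<mu> = sets borel"
    and g_meas: "g \<in> borel \<rightarrow>\<^sub>M S"
    and f_meas: "\<And>\<eta>. f \<eta> \<in> borel_measurable borel"
    and t_pos: "t > 0"
    \<comment> \<open>p_{Y_t,eta} is the density of Y_t\<close>
    and pY_meas: "\<And>\<eta>. pY \<eta> \<in> borel_measurable borel"
    and pY_pos: "\<And>\<eta> y. pY \<eta> y > 0"
    and pY_dens: "\<And>\<eta>. distr M borel (Y \<eta>) = density lborel (\<lambda>y. ennreal (pY \<eta> y))"
    \<comment> \<open>p_{Y_t|T,eta} is the conditional density of Y_t given T
        (density of the law of (T,Y_t) w.r.t. (law of T) x Lebesgue),
        normalised to be a probability density for every tau\<close>
    and pYT_meas: "\<And>\<eta>. (\<lambda>(\<tau>, y). pYT \<eta> \<tau> y) \<in> borel_measurable (S \<Otimes>\<^sub>M borel)"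
    and pYT_pos: "\<And>\<eta> \<tau> y. pYT \<eta> \<tau> y > 0"
    and pYT_norm: "\<And>\<eta> \<tau>. integrable lborel (pYT \<eta> \<tau>) \<and> (\<integral>y. pYT \<eta> \<tau> y \<partial>lborel) = 1"
    and pYT_dens: "\<And>\<eta>. distr M (S \<Otimes>\<^sub>M borel) (\<lambda>\<omega>. (T \<omega>, Y \<eta> \<omega>))
                        = density (\<nu> \<Otimes>\<^sub>M lborel) (\<lambda>(\<tau>, y). ennreal (pYT \<eta> \<tau> y))"
    \<comment> \<open>differentiability\<close>
    and f_diff: "\<And>x. ((\<lambda>\<eta>. f \<eta> x) has_derivative (\<lambda>h. Jf x *v h)) (at \<eta>0)"
    and pY_diff: "\<And>y. (\<lambda>p. pY (fst p) (snd p)) differentiable (at (\<eta>0, y))"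
    and pYT_diff: "\<And>\<tau> y. (\<lambda>p. pYT (fst p) \<tau> (snd p)) differentiable (at (\<eta>0, y))"
    \<comment> \<open>exchange of differentiation in eta with expectation over (X, Z_t)\<close>
    and L_int: "\<And>\<eta>. integrable M (L \<eta>)"
    and dL_int: "integrable M (\<lambda>\<omega>. grad (\<lambda>\<eta>. L \<eta> \<omega>) \<eta>0)"
    and exch_E: "((\<lambda>\<eta>. \<integral>\<omega>. L \<eta> \<omega> \<partial>M) has_derivative
                   (\<lambda>h. (\<integral>\<omega>. grad (\<lambda>\<eta>. L \<eta> \<omega>) \<eta>0 \<partial>M) \<bullet> h)) (at \<eta>0)"
    and dpY_int: "integrable M (\<lambda>\<omega>. grad (\<lambda>\<eta>. ln (pY \<eta> (Y \<eta>0 \<omega>))) \<eta>0)"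
    and dpYT_int: "integrable M (\<lambda>\<omega>. grad (\<lambda>\<eta>. ln (pYT \<eta> (T \<omega>) (Y \<eta>0 \<omega>))) \<eta>0)"
    \<comment> \<open>exchange of differentiation in eta with integration over y\<close>
    and exch_pY: "integrable lborel (\<lambda>y. grad (\<lambda>\<eta>. pY \<eta> y) \<eta>0) \<and>
                  ((\<lambda>\<eta>. \<integral>y. pY \<eta> y \<partial>lborel) has_derivative
                   (\<lambda>h. (\<integral>y. grad (\<lambda>\<eta>. pY \<eta> y) \<eta>0 \<partial>lborel) \<bullet> h)) (at \<eta>0)"
    and exch_pYT: "\<And>\<tau>. \<tau> \<in> space S \<Longrightarrow>
                  integrable lborel (\<lambda>y. grad (\<lambda>\<eta>. pYT \<eta> \<tau> y) \<eta>0) \<and>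
                  ((\<lambda>\<eta>. \<integral>y. pYT \<eta> \<tau> y \<partial>lborel) has_derivative
                   (\<lambda>h. (\<integral>y. grad (\<lambda>\<eta>. pYT \<eta> \<tau> y) \<eta>0 \<partial>lborel) \<bullet> h)) (at \<eta>0)"
  shows "((\<lambda>\<eta>. prob_space.mutual_information M (exp 1) S borel T (Y \<eta>)) has_derivative
           (\<lambda>h. (\<integral>\<omega>. transpose (Jf (fst \<omega>)) *v (sYT (T \<omega>) (Y \<eta>0 \<omega>) - sY (Y \<eta>0 \<omega>)) \<partial>M) \<bullet> h))
         (at \<eta>0)"
proof -
  have "prob_space M"
    unfolding M_def using prob_X prob_space_gauss_vec[OF t_pos] by (rule prob_space_pair)
  then interpret prob_space M .
  have sets_M: "sets M = sets (borel \<Otimes>\<^sub>M (borel :: (real^'m) measure))"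
    unfolding M_def by (rule sets_pair_measure_cong[OF sets_X]) (simp add: gauss_vec_def)
  have T_meas [measurable]: "T \<in> M \<rightarrow>\<^sub>M S"
    unfolding measurable_cong_sets[OF sets_M refl] T_def using g_meas by measurable
  have Y_meas [measurable]: "Y \<eta> \<in> M \<rightarrow>\<^sub>M borel" for \<eta>
    unfolding measurable_cong_sets[OF sets_M refl] Y_def using f_meas by measurable
  have \<nu>_eq: "\<nu> = distr M S T"
    unfolding \<nu>_def M_def T_def ..
  have PY: "distributed M lborel (Y \<eta>) (\<lambda>y. ennreal (pY \<eta> y))" for \<eta>
    using pY_dens measurable_compose[OF pY_meas measurable_ennreal]
    by (intro distributedI_cong_sets[OF _ Y_meas]) simp_all
  have PTY: "distributed M (\<nu> \<Otimes>\<^sub>M lborel) (\<lambda>\<omega>. (T \<omega>, Y \<eta> \<omega>)) (\<lambda>q. ennreal (pYT \<eta> (fst q) (snd q)))"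
    for \<eta>
  proof (rule distributedI_cong_sets)
    show "sets (S \<Otimes>\<^sub>M borel) = sets (\<nu> \<Otimes>\<^sub>M (lborel :: (real^'m) measure))"
      by (rule sets_pair_measure_cong) (simp_all add: \<nu>_eq)
    show "(\<lambda>q. ennreal (pYT \<eta> (fst q) (snd q))) \<in> borel_measurable (S \<Otimes>\<^sub>M borel)"
      using pYT_meas[of \<eta>] by (simp add: split_beta')
  qed (use pYT_dens in \<open>simp_all add: split_beta'\<close>)
  have dpY: "(\<lambda>\<eta>. pY \<eta> y) differentiable (at \<eta>0)" for y
    using differentiable_at_Pair_left[OF pY_diff] by simp
  have dpYT: "(\<lambda>\<eta>. pYT \<eta> \<tau> y) differentiable (at \<eta>0)" for \<tau> y
    using differentiable_at_Pair_left[OF pYT_diff] by simp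
  have MI: "mutual_information (exp 1) S borel T (Y \<eta>) = (\<integral>\<omega>. L \<eta> \<omega> \<partial>M)" for \<eta>
  proof -
    have "mutual_information (exp 1) S borel T (Y \<eta>) = mutual_information (exp 1) S lborel T (Y \<eta>)"
      by (rule mutual_information_cong_sets) simp_all
    with mutual_information_eq_integral_ln_conditional_density[OF lborel.sigma_finite_measure_axioms
        T_meas PY pY_pos PTY[unfolded \<nu>_eq] pYT_pos]
    show ?thesis
      by (simp add: L_def T_def Y_def)
  qed
  define score_Y where "score_Y \<omega> = grad (\<lambda>\<eta>. ln (pY \<eta> (Y \<eta>0 \<omega>))) \<eta>0" for \<omega>
  define score_T where "score_T \<omega> = grad (\<lambda>\<eta>. ln (pYT \<eta> (T \<omega>) (Y \<eta>0 \<omega>))) \<eta>0" for \<omega>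
  define D where "D \<omega> = transpose (Jf (fst \<omega>)) *v (sYT (T \<omega>) (Y \<eta>0 \<omega>) - sY (Y \<eta>0 \<omega>))" for \<omega>
  have "(\<integral>\<omega>. score_Y \<omega> \<partial>M) = 0"
    unfolding score_Y_def using PY pY_pos dpY dpY_int exch_pY
    by (intro integral_score_eq_0[where p = pY and X = Y and N = lborel]) auto
  moreover have "(\<integral>\<omega>. score_T \<omega> \<partial>M) = 0"
  proof -
    have "sigma_finite_measure \<nu>"
      unfolding \<nu>_eq by (intro prob_space_imp_sigma_finite prob_space_distr T_meas)
    then show ?thesis
      unfolding score_T_def using sets_eq_imp_space_eq[of \<nu> S] pYT_pos dpYT dpYT_int pYT_norm exch_pYT
      by (intro integral_conditional_score_eq_0[where p = pYT and N = lborel,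
            OF _ lborel.sigma_finite_measure_axioms PTY]) (auto simp: \<nu>_eq)
  qed
  moreover have grad_L: "grad (\<lambda>\<eta>. L \<eta> \<omega>) \<eta>0 = D \<omega> + score_T \<omega> - score_Y \<omega>" for \<omega>
  proof -
    obtain x z where \<omega>: "\<omega> = (x, z)"
      by fastforce
    have "((\<lambda>\<eta>. f \<eta> x + z) has_derivative (\<lambda>h. Jf x *v h)) (at \<eta>0)"
      using has_derivative_add[OF f_diff has_derivative_const] by simp
    then show ?thesis
      unfolding L_def D_def score_T_def score_Y_def sYT_def sY_def T_def Y_def \<omega> fst_conv snd_conv
      by (intro grad_ln_ratio_along[where p = pY and q = "\<lambda>\<eta> y. pYT \<eta> (g x) y"] pY_diff pYT_diff pY_pos pYT_pos)
  qed
  moreover have "integrable M score_T" "integrable M score_Y"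
    using dpYT_int dpY_int unfolding score_T_def score_Y_def .
  moreover have "integrable M (\<lambda>\<omega>. grad (\<lambda>\<eta>. L \<eta> \<omega>) \<eta>0 - score_T \<omega> + score_Y \<omega>)"
    using dL_int calculation by (intro Bochner_Integration.integrable_add Bochner_Integration.integrable_diff)
  ultimately have "(\<integral>\<omega>. grad (\<lambda>\<eta>. L \<eta> \<omega>) \<eta>0 \<partial>M) = (\<integral>\<omega>. D \<omega> \<partial>M)"
    by (simp add: grad_L)
  then show ?thesis
    using exch_E by (simp add: MI D_def)
qed

end
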